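(* Let $L$ be a multisorted algebra in the positive existential signature satisfying axioms (1), (2), (7), (9). Let $F$ be a prime filter on sort $n$ of $L$ and let $r$ be an element of sort $n+1$ with $\exists(r)\in F$. Then there is a prime filter $G$ on sort $n+1$ such that $r\in G$ and for all $u$ of sort $n$, $c(u)\in G$ if and only if $u\in F$, where $c\colon n\to n+1$ is the associated cylindrification.
   Context: The Boolean prime ideal theorem is assumed. Signature. There is a sort $n$ for each $n\ge0$. For every function $\alpha\colon\{1,\dots,n\}\to\{1,\dots,k\}$ there is a unary function symbol ("substitution") $\alpha\colon n\to k$ (argument of sort $n$, value of sort $k$). Each sort has $0,1,\vee,\wedge$; for each $n$ there is $\exists\colon n+1\to n$ (positive existential signature). The associated cylindrification of $\exists\colon n+1\to n$ is the substitution $c\colon n\to n+1$ given by $c(i)=i$. Axioms: (1) each sort is a bounded distributive lattice under $0,1,\vee,\wedge$; (2) substitutions preserve $0,1,\vee,\wedge$; (7) $\exists(0)=0$ and $\exists(r\vee s)=\exists(r)\vee\exists(s)$; (9) $\exists(r\wedge c(s))=\exists(r)\wedge s$ for all $r$ of sort $n+1$, $s$ of sort $n$. A prime filter is a proper, nonempty, upward-closed, $\wedge$-closed subset of a sort with $x\vee y\in F\Rightarrow x\in F$ or $y\in F$. *)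

theory Defs
  imports "HOL-Library.FuncSet"
begin

(* The substitution symbol for alpha : {1..n} -> {1..k} is sub n k alpha,
  where alpha ranges over the extensional functions {1..n} ->E {1..k}.
  ex n is the existential quantifier from sort n+1 to sort n. *)

record 'a pe_alg =
  car  :: "nat \<Rightarrow> 'a set"
  bot  :: "nat \<Rightarrow> 'a"
  top  :: "nat \<Rightarrow> 'a"
  join :: "nat \<Rightarrow> 'a \<Rightarrow> 'a \<Rightarrow> 'a"
  meet :: "nat \<Rightarrow> 'a \<Rightarrow> 'a \<Rightarrow> 'a"
  sub  :: "nat \<Rightarrow> nat \<Rightarrow> (nat \<Rightarrow> nat) \<Rightarrow> 'a \<Rightarrow> 'a"
  ex   :: "nat \<Rightarrow> 'a \<Rightarrow> 'a"

(* Axiom (1): each sort is a bounded distributive lattice. *)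
definition bdl_sort :: "'a pe_alg \<Rightarrow> nat \<Rightarrow> bool" where
  "bdl_sort L n \<longleftrightarrow>
     bot L n \<in> car L n \<and> top L n \<in> car L n \<and>
     (\<forall>x\<in>car L n. \<forall>y\<in>car L n. join L n x y \<in> car L n \<and> meet L n x y \<in> car L n) \<and>
     (\<forall>x\<in>car L n. \<forall>y\<in>car L n. join L n x y = join L n y x \<and> meet L n x y = meet L n y x) \<and>
     (\<forall>x\<in>car L n. \<forall>y\<in>car L n. \<forall>z\<in>car L n.
        join L n (join L n x y) z = join L n x (join L n y z) \<and>
        meet L n (meet L n x y) z = meet L n x (meet L n y z)) \<and>
     (\<forall>x\<in>car L n. \<forall>y\<in>car L n.
        join L n x (meet L n x y) = x \<and> meet L n x (join L n x y) = x) \<and>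
     (\<forall>x\<in>car L n. \<forall>y\<in>car L n. \<forall>z\<in>car L n.
        meet L n x (join L n y z) = join L n (meet L n x y) (meet L n x z)) \<and>
     (\<forall>x\<in>car L n. join L n x (bot L n) = x \<and> meet L n x (top L n) = x)"

(* Axiom (2): substitutions are well-sorted and preserve 0, 1, join, meet. *)
definition subst_ax :: "'a pe_alg \<Rightarrow> bool" where
  "subst_ax L \<longleftrightarrow>
     (\<forall>n k. \<forall>\<alpha>\<in>{1..n} \<rightarrow>\<^sub>E {1..k}.
        (\<forall>x\<in>car L n. sub L n k \<alpha> x \<in> car L k) \<and>
        sub L n k \<alpha> (bot L n) = bot L k \<and>
        sub L n k \<alpha> (top L n) = top L k \<and>
        (\<forall>x\<in>car L n. \<forall>y\<in>car L n.
           sub L n k \<alpha> (join L n x y) = join L k (sub L n k \<alpha> x) (sub L n k \<alpha> y) \<and>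
           sub L n k \<alpha> (meet L n x y) = meet L k (sub L n k \<alpha> x) (sub L n k \<alpha> y)))"

definition cyl :: "'a pe_alg \<Rightarrow> nat \<Rightarrow> 'a \<Rightarrow> 'a" where
  "cyl L n = sub L n (Suc n) (restrict (\<lambda>i. i) {1..n})"

(* Axioms (7) and (9) for the existential quantifier (plus well-sortedness). *)
definition ex_ax :: "'a pe_alg \<Rightarrow> bool" where
  "ex_ax L \<longleftrightarrow>
     (\<forall>n. (\<forall>r\<in>car L (Suc n). ex L n r \<in> car L n) \<and>
          ex L n (bot L (Suc n)) = bot L n \<and>
          (\<forall>r\<in>car L (Suc n). \<forall>s\<in>car L (Suc n).
             ex L n (join L (Suc n) r s) = join L n (ex L n r) (ex L n s)) \<and>
          (\<forall>r\<in>car L (Suc n). \<forall>s\<in>car L n.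
             ex L n (meet L (Suc n) r (cyl L n s)) = meet L n (ex L n r) s))"

definition pe_algebra :: "'a pe_alg \<Rightarrow> bool" where
  "pe_algebra L \<longleftrightarrow> (\<forall>n. bdl_sort L n) \<and> subst_ax L \<and> ex_ax L"

definition leq :: "'a pe_alg \<Rightarrow> nat \<Rightarrow> 'a \<Rightarrow> 'a \<Rightarrow> bool" where
  "leq L n x y \<longleftrightarrow> meet L n x y = x"

definition prime_filter :: "'a pe_alg \<Rightarrow> nat \<Rightarrow> 'a set \<Rightarrow> bool" where
  "prime_filter L n F \<longleftrightarrow>
     F \<subseteq> car L n \<and> F \<noteq> car L n \<and> F \<noteq> {} \<and>
     (\<forall>x\<in>F. \<forall>y\<in>car L n. leq L n x y \<longrightarrow> y \<in> F) \<and>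
     (\<forall>x\<in>F. \<forall>y\<in>F. meet L n x y \<in> F) \<and>
     (\<forall>x\<in>car L n. \<forall>y\<in>car L n. join L n x y \<in> F \<longrightarrow> x \<in> F \<or> y \<in> F)"

end

theory Submission
  imports Defs
begin

text \<open>
  In sort \<open>n+1\<close>, let \<open>G\<^sub>0\<close> be the filter generated by \<open>r\<close> and \<open>c(F)\<close>, and \<open>I\<close> the ideal
  generated by the \<open>c(u)\<close> with \<open>u \<notin> F\<close>; \<open>I\<close> is an ideal because \<open>F\<close> is prime.
  They are disjoint: if \<open>r \<and> c(f) \<le> c(u)\<close>, then applying the monotone map \<open>\<exists>\<close> and axiom (9)
  gives \<open>\<exists>(r) \<and> f \<le> \<exists>(c(u)) \<le> u\<close>, so \<open>u \<in> F\<close>. A filter maximal among those containing \<open>G\<^sub>0\<close>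
  and missing \<open>I\<close> (Zorn) is prime, contains \<open>r\<close>, and its preimage under \<open>c\<close> is exactly \<open>F\<close>.
\<close>

locale bdlattice =
  fixes C :: "'a set" and jn mt :: "'a \<Rightarrow> 'a \<Rightarrow> 'a" and bt tp :: 'a
  assumes bt_closed: "bt \<in> C" and tp_closed: "tp \<in> C"
    and jn_closed: "x \<in> C \<Longrightarrow> y \<in> C \<Longrightarrow> jn x y \<in> C"
    and mt_closed: "x \<in> C \<Longrightarrow> y \<in> C \<Longrightarrow> mt x y \<in> C"
    and jn_comm: "x \<in> C \<Longrightarrow> y \<in> C \<Longrightarrow> jn x y = jn y x"
    and mt_comm: "x \<in> C \<Longrightarrow> y \<in> C \<Longrightarrow> mt x y = mt y x"
    and jn_assoc: "x \<in> C \<Longrightarrow> y \<in> C \<Longrightarrow> z \<in> C \<Longrightarrow> jn (jn x y) z = jn x (jn y z)"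
    and mt_assoc: "x \<in> C \<Longrightarrow> y \<in> C \<Longrightarrow> z \<in> C \<Longrightarrow> mt (mt x y) z = mt x (mt y z)"
    and jn_absorb: "x \<in> C \<Longrightarrow> y \<in> C \<Longrightarrow> jn x (mt x y) = x"
    and mt_absorb: "x \<in> C \<Longrightarrow> y \<in> C \<Longrightarrow> mt x (jn x y) = x"
    and mt_jn_distrib: "x \<in> C \<Longrightarrow> y \<in> C \<Longrightarrow> z \<in> C \<Longrightarrow> mt x (jn y z) = jn (mt x y) (mt x z)"
    and jn_bt: "x \<in> C \<Longrightarrow> jn x bt = x"
    and mt_tp: "x \<in> C \<Longrightarrow> mt x tp = x"
begin

definition le :: "'a \<Rightarrow> 'a \<Rightarrow> bool" where
  "le x y \<longleftrightarrow> mt x y = x"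

lemma mt_idem: "x \<in> C \<Longrightarrow> mt x x = x"
  using mt_absorb[of x "mt x x"] jn_absorb[of x x] by (simp add: mt_closed)

lemma le_refl: "x \<in> C \<Longrightarrow> le x x"
  by (simp add: le_def mt_idem)

lemma le_trans: "x \<in> C \<Longrightarrow> y \<in> C \<Longrightarrow> z \<in> C \<Longrightarrow> le x y \<Longrightarrow> le y z \<Longrightarrow> le x z"
  unfolding le_def using mt_assoc[of x y z] by simp

lemma mt_lower1: "x \<in> C \<Longrightarrow> y \<in> C \<Longrightarrow> le (mt x y) x"
  unfolding le_def using mt_assoc[of x y x] mt_assoc[of x x y] mt_comm[of y x] by (simp add: mt_idem)

lemma mt_lower2: "x \<in> C \<Longrightarrow> y \<in> C \<Longrightarrow> le (mt x y) y"
  unfolding le_def using mt_assoc[of x y y] by (simp add: mt_idem)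

lemma mt_greatest: "x \<in> C \<Longrightarrow> y \<in> C \<Longrightarrow> z \<in> C \<Longrightarrow> le z x \<Longrightarrow> le z y \<Longrightarrow> le z (mt x y)"
  unfolding le_def using mt_assoc[of z x y] by simp

lemma jn_upper1: "x \<in> C \<Longrightarrow> y \<in> C \<Longrightarrow> le x (jn x y)"
  unfolding le_def by (simp add: mt_absorb)

lemma jn_upper2: "x \<in> C \<Longrightarrow> y \<in> C \<Longrightarrow> le y (jn x y)"
  unfolding le_def using mt_absorb[of y x] jn_comm[of x y] by simp

lemma jn_least: "x \<in> C \<Longrightarrow> y \<in> C \<Longrightarrow> z \<in> C \<Longrightarrow> le x z \<Longrightarrow> le y z \<Longrightarrow> le (jn x y) z"
  unfolding le_def
  using mt_comm[of "jn x y" z] mt_jn_distrib[of z x y] mt_comm[of z x] mt_comm[of z y]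
  by (simp add: jn_closed)

lemma le_tp: "x \<in> C \<Longrightarrow> le x tp"
  unfolding le_def by (simp add: mt_tp)

lemma le_iff_jn: "x \<in> C \<Longrightarrow> y \<in> C \<Longrightarrow> le x y \<longleftrightarrow> jn x y = y"
  unfolding le_def
  using mt_absorb[of x y] jn_absorb[of y x] jn_comm[of x y] mt_comm[of x y] by auto

lemma mt_mono:
  assumes "x \<in> C" "y \<in> C" "x' \<in> C" "y' \<in> C" "le x x'" "le y y'"
  shows "le (mt x y) (mt x' y')"
proof (rule mt_greatest)
  show "le (mt x y) x'" using le_trans[OF mt_closed _ _ mt_lower1] assms by blast
  show "le (mt x y) y'" using le_trans[OF mt_closed _ _ mt_lower2] assms by blast
qed (use assms mt_closed in auto)

lemma jn_mono:
  assumes "x \<in> C" "y \<in> C" "x' \<in> C" "y' \<in> C" "le x x'" "le y y'"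
  shows "le (jn x y) (jn x' y')"
proof (rule jn_least)
  show "le x (jn x' y')" using le_trans[OF _ _ jn_closed _ jn_upper1] assms by blast
  show "le y (jn x' y')" using le_trans[OF _ _ jn_closed _ jn_upper2] assms by blast
qed (use assms jn_closed in auto)

definition lattice_filter :: "'a set \<Rightarrow> bool" where
  "lattice_filter G \<longleftrightarrow> G \<subseteq> C \<and> G \<noteq> {} \<and> (\<forall>x\<in>G. \<forall>y\<in>C. le x y \<longrightarrow> y \<in> G) \<and>
     (\<forall>x\<in>G. \<forall>y\<in>G. mt x y \<in> G)"

lemma lattice_filter_tp: "lattice_filter G \<Longrightarrow> tp \<in> G"
  unfolding lattice_filter_def using le_tp tp_closed by blast

definition lattice_ideal :: "'a set \<Rightarrow> bool" where
  "lattice_ideal I \<longleftrightarrow> I \<subseteq> C \<and> I \<noteq> {} \<and> (\<forall>x\<in>I. \<forall>y\<in>C. le y x \<longrightarrow> y \<in> I) \<and>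
     (\<forall>x\<in>I. \<forall>y\<in>I. jn x y \<in> I)"

definition up_closure :: "'a set \<Rightarrow> 'a set" where
  "up_closure S = {z \<in> C. \<exists>s\<in>S. le s z}"

definition down_closure :: "'a set \<Rightarrow> 'a set" where
  "down_closure S = {z \<in> C. \<exists>s\<in>S. le z s}"

lemma subset_up_closure: "S \<subseteq> C \<Longrightarrow> S \<subseteq> up_closure S"
  unfolding up_closure_def using le_refl by blast

lemma subset_down_closure: "S \<subseteq> C \<Longrightarrow> S \<subseteq> down_closure S"
  unfolding down_closure_def using le_refl by blast

lemma lattice_filter_up_closure:
  assumes "S \<subseteq> C" "S \<noteq> {}"
    and directed: "\<And>s t. s \<in> S \<Longrightarrow> t \<in> S \<Longrightarrow> \<exists>u\<in>S. le u s \<and> le u t"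
  shows "lattice_filter (up_closure S)"
  unfolding lattice_filter_def
proof (intro conjI ballI impI)
  show "up_closure S \<subseteq> C" "up_closure S \<noteq> {}"
    using assms(1,2) subset_up_closure[OF assms(1)] unfolding up_closure_def by blast+
next
  fix x y assume "x \<in> up_closure S" "y \<in> C" "le x y"
  then show "y \<in> up_closure S"
    using assms(1) le_trans unfolding up_closure_def by blast
next
  fix x y assume "x \<in> up_closure S" "y \<in> up_closure S"
  then obtain s t where st: "s \<in> S" "t \<in> S" "le s x" "le t y" "x \<in> C" "y \<in> C"
    unfolding up_closure_def by blast
  then obtain u where "u \<in> S" "le u s" "le u t" using directed by blast
  with st assms(1) have "le u (mt x y)"
    by (meson le_trans mt_greatest subsetD)
  with \<open>u \<in> S\<close> st show "mt x y \<in> up_closure S"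
    unfolding up_closure_def by (blast intro: mt_closed)
qed

lemma lattice_ideal_down_closure:
  assumes "S \<subseteq> C" "S \<noteq> {}"
    and directed: "\<And>s t. s \<in> S \<Longrightarrow> t \<in> S \<Longrightarrow> \<exists>u\<in>S. le s u \<and> le t u"
  shows "lattice_ideal (down_closure S)"
  unfolding lattice_ideal_def
proof (intro conjI ballI impI)
  show "down_closure S \<subseteq> C" "down_closure S \<noteq> {}"
    using assms(1,2) subset_down_closure[OF assms(1)] unfolding down_closure_def by blast+
next
  fix x y assume "x \<in> down_closure S" "y \<in> C" "le y x"
  then show "y \<in> down_closure S"
    using assms(1) le_trans unfolding down_closure_def by blast
next
  fix x y assume "x \<in> down_closure S" "y \<in> down_closure S"
  then obtain s t where st: "s \<in> S" "t \<in> S" "le x s" "le y t" "x \<in> C" "y \<in> C"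
    unfolding down_closure_def by blast
  then obtain u where "u \<in> S" "le s u" "le t u" using directed by blast
  with st assms(1) have "le (jn x y) u"
    by (meson le_trans jn_least subsetD)
  with \<open>u \<in> S\<close> st show "jn x y \<in> down_closure S"
    unfolding down_closure_def by (blast intro: jn_closed)
qed

lemma lattice_filter_Union_chain:
  assumes "CC \<noteq> {}" and filters: "\<And>G. G \<in> CC \<Longrightarrow> lattice_filter G"
    and chain: "\<And>X Y. X \<in> CC \<Longrightarrow> Y \<in> CC \<Longrightarrow> X \<subseteq> Y \<or> Y \<subseteq> X"
  shows "lattice_filter (\<Union>CC)"
  unfolding lattice_filter_def
proof (intro conjI ballI impI)
  show "\<Union>CC \<subseteq> C" using filters unfolding lattice_filter_def by blast
  obtain G where "G \<in> CC" using \<open>CC \<noteq> {}\<close> by blast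
  with filters have "G \<noteq> {}" unfolding lattice_filter_def by blast
  with \<open>G \<in> CC\<close> show "\<Union>CC \<noteq> {}" by blast
next
  fix x y assume "x \<in> \<Union>CC" "y \<in> C" "le x y"
  then obtain G where "G \<in> CC" "x \<in> G" by blast
  with filters \<open>y \<in> C\<close> \<open>le x y\<close> have "y \<in> G" unfolding lattice_filter_def by blast
  with \<open>G \<in> CC\<close> show "y \<in> \<Union>CC" by blast
next
  fix x y assume "x \<in> \<Union>CC" "y \<in> \<Union>CC"
  then obtain X Y where "X \<in> CC" "Y \<in> CC" "x \<in> X" "y \<in> Y" by blast
  with chain obtain Z where "Z \<in> CC" "x \<in> Z" "y \<in> Z" by blast
  with filters have "mt x y \<in> Z" unfolding lattice_filter_def by blast
  with \<open>Z \<in> CC\<close> show "mt x y \<in> \<Union>CC" by blast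
qed

definition maximal_disjoint_filter :: "'a set \<Rightarrow> 'a set \<Rightarrow> bool" where
  "maximal_disjoint_filter I M \<longleftrightarrow> lattice_filter M \<and> M \<inter> I = {} \<and>
     (\<forall>X. lattice_filter X \<and> M \<subseteq> X \<and> X \<inter> I = {} \<longrightarrow> X = M)"

lemma maximal_disjoint_filter_exists:
  assumes "lattice_filter G0" "G0 \<inter> I = {}"
  shows "\<exists>M. maximal_disjoint_filter I M \<and> G0 \<subseteq> M"
proof -
  define A where "A = {G. lattice_filter G \<and> G0 \<subseteq> G \<and> G \<inter> I = {}}"
  have "\<exists>M\<in>A. \<forall>X\<in>A. M \<subseteq> X \<longrightarrow> X = M"
  proof (rule subset_Zorn_nonempty)
    show "A \<noteq> {}" using assms unfolding A_def by blast
  next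
    fix CC assume "CC \<noteq> {}" "subset.chain A CC"
    then have "CC \<subseteq> A" "\<And>X Y. X \<in> CC \<Longrightarrow> Y \<in> CC \<Longrightarrow> X \<subseteq> Y \<or> Y \<subseteq> X"
      unfolding subset.chain_def by auto
    with \<open>CC \<noteq> {}\<close> show "\<Union>CC \<in> A"
      using lattice_filter_Union_chain[of CC] unfolding A_def by blast
  qed
  then obtain M where "M \<in> A" and "\<forall>X\<in>A. M \<subseteq> X \<longrightarrow> X = M" ..
  then have "\<forall>X. lattice_filter X \<and> M \<subseteq> X \<and> X \<inter> I = {} \<longrightarrow> X = M"
    unfolding A_def by blast
  with \<open>M \<in> A\<close> show ?thesis
    unfolding A_def maximal_disjoint_filter_def by blast
qed

lemma maximal_disjoint_filter_extend:
  assumes M: "maximal_disjoint_filter I M" and "a \<in> C" "a \<notin> M"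
  shows "\<exists>g\<in>M. \<exists>i\<in>I. le (mt g a) i"
proof (rule ccontr)
  assume none: "\<not> ?thesis"
  have "lattice_filter M" "M \<inter> I = {}" using M unfolding maximal_disjoint_filter_def by auto
  then have MC: "M \<subseteq> C" and "M \<noteq> {}" and M_mt: "\<And>g h. g \<in> M \<Longrightarrow> h \<in> M \<Longrightarrow> mt g h \<in> M"
    unfolding lattice_filter_def by auto
  define S where "S = (\<lambda>g. mt g a) ` M"
  have SC: "S \<subseteq> C" using MC \<open>a \<in> C\<close> mt_closed unfolding S_def by blast
  have "lattice_filter (up_closure S)"
  proof (rule lattice_filter_up_closure[OF SC])
    show "S \<noteq> {}" using \<open>M \<noteq> {}\<close> unfolding S_def by blast
  next
    fix s t assume "s \<in> S" "t \<in> S"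
    then obtain g h where "g \<in> M" "h \<in> M" "s = mt g a" "t = mt h a" unfolding S_def by blast
    then have gh: "g \<in> C" "h \<in> C" using MC by auto
    have "le (mt (mt g h) a) s"
      using mt_mono[OF mt_closed[OF gh] \<open>a \<in> C\<close> _ \<open>a \<in> C\<close> mt_lower1[OF gh] le_refl]
        \<open>s = mt g a\<close> gh \<open>a \<in> C\<close> by blast
    moreover have "le (mt (mt g h) a) t"
      using mt_mono[OF mt_closed[OF gh] \<open>a \<in> C\<close> _ \<open>a \<in> C\<close> mt_lower2[OF gh] le_refl]
        \<open>t = mt h a\<close> gh \<open>a \<in> C\<close> by blast
    ultimately show "\<exists>u\<in>S. le u s \<and> le u t"
      using \<open>g \<in> M\<close> \<open>h \<in> M\<close> unfolding S_def by (blast intro: M_mt)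
  qed
  moreover have "M \<subseteq> up_closure S"
    unfolding S_def up_closure_def using MC \<open>a \<in> C\<close> mt_lower1 by blast
  moreover have "up_closure S \<inter> I = {}"
    using none unfolding up_closure_def S_def by blast
  ultimately have "up_closure S = M" using M unfolding maximal_disjoint_filter_def by blast
  obtain g where "g \<in> M" using \<open>M \<noteq> {}\<close> by blast
  then have "a \<in> up_closure S"
    unfolding S_def up_closure_def using MC \<open>a \<in> C\<close> mt_lower2 by blast
  with \<open>up_closure S = M\<close> \<open>a \<notin> M\<close> show False by blast
qed

lemma maximal_disjoint_filter_prime:
  assumes I: "lattice_ideal I" and M: "maximal_disjoint_filter I M"
    and x: "x \<in> C" and y: "y \<in> C" and "jn x y \<in> M"
  shows "x \<in> M \<or> y \<in> M"
proof (rule ccontr)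
  assume "\<not> ?thesis"
  then have "x \<notin> M" "y \<notin> M" by auto
  obtain g1 i1 where g1: "g1 \<in> M" "i1 \<in> I" "le (mt g1 x) i1"
    using maximal_disjoint_filter_extend[OF M x \<open>x \<notin> M\<close>] by blast
  obtain g2 i2 where g2: "g2 \<in> M" "i2 \<in> I" "le (mt g2 y) i2"
    using maximal_disjoint_filter_extend[OF M y \<open>y \<notin> M\<close>] by blast
  have MC: "M \<subseteq> C" and M_mt: "\<And>g h. g \<in> M \<Longrightarrow> h \<in> M \<Longrightarrow> mt g h \<in> M" and MI: "M \<inter> I = {}"
    using M unfolding maximal_disjoint_filter_def lattice_filter_def by auto
  have IC: "I \<subseteq> C" and I_down: "\<And>i z. i \<in> I \<Longrightarrow> z \<in> C \<Longrightarrow> le z i \<Longrightarrow> z \<in> I"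
    and I_jn: "\<And>i j. i \<in> I \<Longrightarrow> j \<in> I \<Longrightarrow> jn i j \<in> I"
    using I unfolding lattice_ideal_def by auto
  have C: "g1 \<in> C" "g2 \<in> C" "i1 \<in> C" "i2 \<in> C"
    using g1 g2 MC IC by auto
  have g12: "mt g1 g2 \<in> C" and xy: "jn x y \<in> C"
    using C x y by (simp_all add: mt_closed jn_closed)
  define g where "g = mt (mt g1 g2) (jn x y)"
  have gM: "g \<in> M"
    unfolding g_def using g1 g2 \<open>jn x y \<in> M\<close> by (simp add: M_mt)
  have gC: "g \<in> C" using gM MC by auto
  have "le g (mt g1 g2)" "le g (jn x y)"
    unfolding g_def using g12 xy by (simp_all add: mt_lower1 mt_lower2)
  then have "le g g1" "le g g2"
    using le_trans[OF gC g12 C(1) _ mt_lower1] le_trans[OF gC g12 C(2) _ mt_lower2] C by simp_all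
  have "g = mt g (jn x y)" using \<open>le g (jn x y)\<close> unfolding le_def by simp
  also have "\<dots> = jn (mt g x) (mt g y)" using gC x y by (rule mt_jn_distrib)
  also have "le \<dots> (jn i1 i2)"
  proof (rule jn_mono)
    have "le (mt g x) (mt g1 x)" using mt_mono[OF gC x C(1) x \<open>le g g1\<close> le_refl[OF x]] .
    then show "le (mt g x) i1" using le_trans[OF mt_closed mt_closed C(3)] g1(3) gC C x by blast
    have "le (mt g y) (mt g2 y)" using mt_mono[OF gC y C(2) y \<open>le g g2\<close> le_refl[OF y]] .
    then show "le (mt g y) i2" using le_trans[OF mt_closed mt_closed C(4)] g2(3) gC C y by blast
  qed (use gC C x y mt_closed in auto)
  finally have "g \<in> I"
    using I_down[OF I_jn[OF g1(2) g2(2)] gC] by blast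
  with gM MI show False by blast
qed

theorem prime_filter_separation:
  assumes "lattice_filter G0" "lattice_ideal I" "G0 \<inter> I = {}"
  shows "\<exists>G. lattice_filter G \<and> G0 \<subseteq> G \<and> G \<inter> I = {} \<and>
             (\<forall>x\<in>C. \<forall>y\<in>C. jn x y \<in> G \<longrightarrow> x \<in> G \<or> y \<in> G)"
proof -
  obtain M where M: "maximal_disjoint_filter I M" and "G0 \<subseteq> M"
    using maximal_disjoint_filter_exists[OF assms(1,3)] by blast
  then have "lattice_filter M" "M \<inter> I = {}"
    unfolding maximal_disjoint_filter_def by auto
  with \<open>G0 \<subseteq> M\<close> show ?thesis
    using maximal_disjoint_filter_prime[OF assms(2) M] by blast
qed

end

lemma bdlattice_sort: "bdl_sort L k \<Longrightarrow> bdlattice (car L k) (join L k) (meet L k) (bot L k) (top L k)"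
  unfolding bdl_sort_def by unfold_locales auto

lemma leq_eq_le: "bdl_sort L k \<Longrightarrow> leq L k = bdlattice.le (meet L k)"
  by (simp add: fun_eq_iff leq_def bdlattice.le_def[OF bdlattice_sort])

lemma prime_filter_iff_lattice_filter:
  assumes "bdl_sort L k"
  shows "prime_filter L k G \<longleftrightarrow>
    bdlattice.lattice_filter (car L k) (meet L k) G \<and> G \<noteq> car L k \<and>
    (\<forall>x\<in>car L k. \<forall>y\<in>car L k. join L k x y \<in> G \<longrightarrow> x \<in> G \<or> y \<in> G)"
  unfolding prime_filter_def bdlattice.lattice_filter_def[OF bdlattice_sort[OF assms]]
    leq_eq_le[OF assms] by blast

locale adjacent_sorts =
  fixes L :: "'a pe_alg" and n :: nat
  assumes pe_algebra: "pe_algebra L"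
begin

sublocale lo: bdlattice "car L n" "join L n" "meet L n" "bot L n" "top L n"
  using pe_algebra by (simp add: pe_algebra_def bdlattice_sort)

sublocale hi: bdlattice "car L (Suc n)" "join L (Suc n)" "meet L (Suc n)" "bot L (Suc n)" "top L (Suc n)"
  using pe_algebra by (simp add: pe_algebra_def bdlattice_sort)

lemma cyl_substitution: "restrict (\<lambda>i. i) {1..n} \<in> {1..n} \<rightarrow>\<^sub>E {1..Suc n}"
  by auto

lemma cyl_closed: "u \<in> car L n \<Longrightarrow> cyl L n u \<in> car L (Suc n)"
  using pe_algebra cyl_substitution unfolding pe_algebra_def subst_ax_def cyl_def by blast

lemma cyl_meet:
  "u \<in> car L n \<Longrightarrow> v \<in> car L n \<Longrightarrow> cyl L n (meet L n u v) = meet L (Suc n) (cyl L n u) (cyl L n v)"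
  using pe_algebra cyl_substitution unfolding pe_algebra_def subst_ax_def cyl_def by blast

lemma ex_closed: "x \<in> car L (Suc n) \<Longrightarrow> ex L n x \<in> car L n"
  using pe_algebra unfolding pe_algebra_def ex_ax_def by blast

lemma ex_join: "x \<in> car L (Suc n) \<Longrightarrow> y \<in> car L (Suc n) \<Longrightarrow>
    ex L n (join L (Suc n) x y) = join L n (ex L n x) (ex L n y)"
  using pe_algebra unfolding pe_algebra_def ex_ax_def by blast

lemma ex_meet_cyl: "x \<in> car L (Suc n) \<Longrightarrow> u \<in> car L n \<Longrightarrow>
    ex L n (meet L (Suc n) x (cyl L n u)) = meet L n (ex L n x) u"
  using pe_algebra unfolding pe_algebra_def ex_ax_def by blast

lemma cyl_mono: "u \<in> car L n \<Longrightarrow> v \<in> car L n \<Longrightarrow> lo.le u v \<Longrightarrow> hi.le (cyl L n u) (cyl L n v)"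
  unfolding lo.le_def hi.le_def by (metis cyl_meet)

lemma ex_mono:
  "x \<in> car L (Suc n) \<Longrightarrow> y \<in> car L (Suc n) \<Longrightarrow> hi.le x y \<Longrightarrow> lo.le (ex L n x) (ex L n y)"
  by (simp add: hi.le_iff_jn lo.le_iff_jn ex_closed flip: ex_join)

lemma ex_cyl_le: "u \<in> car L n \<Longrightarrow> lo.le (ex L n (cyl L n u)) u"
  using ex_meet_cyl[OF hi.tp_closed, of u] lo.mt_lower2[OF ex_closed[OF hi.tp_closed], of u]
  by (simp add: hi.mt_comm hi.mt_tp cyl_closed hi.tp_closed)

lemma ex_le_of_le_cyl:
  "x \<in> car L (Suc n) \<Longrightarrow> u \<in> car L n \<Longrightarrow> hi.le x (cyl L n u) \<Longrightarrow> lo.le (ex L n x) u"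
  by (meson cyl_closed ex_closed ex_cyl_le ex_mono lo.le_trans)

definition cyl_filter :: "'a \<Rightarrow> 'a set \<Rightarrow> 'a set" where
  "cyl_filter r F = hi.up_closure ((\<lambda>f. meet L (Suc n) r (cyl L n f)) ` F)"

definition cyl_ideal :: "'a set \<Rightarrow> 'a set" where
  "cyl_ideal F = hi.down_closure (cyl L n ` (car L n - F))"

lemma lattice_filter_cyl_filter:
  assumes F: "lo.lattice_filter F" and r: "r \<in> car L (Suc n)"
  shows "hi.lattice_filter (cyl_filter r F)"
proof -
  have FC: "F \<subseteq> car L n" and "F \<noteq> {}"
    and F_mt: "\<And>f g. f \<in> F \<Longrightarrow> g \<in> F \<Longrightarrow> meet L n f g \<in> F"
    using F unfolding lo.lattice_filter_def by auto
  define B where "B = (\<lambda>f. meet L (Suc n) r (cyl L n f)) ` F"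
  have "hi.lattice_filter (hi.up_closure B)"
  proof (rule hi.lattice_filter_up_closure)
    show "B \<subseteq> car L (Suc n)" "B \<noteq> {}"
      unfolding B_def using FC \<open>F \<noteq> {}\<close> r cyl_closed hi.mt_closed by blast+
    fix s t assume "s \<in> B" "t \<in> B"
    then obtain f g where fg: "f \<in> F" "g \<in> F"
      and st: "s = meet L (Suc n) r (cyl L n f)" "t = meet L (Suc n) r (cyl L n g)"
      unfolding B_def by blast
    have C: "f \<in> car L n" "g \<in> car L n" "meet L n f g \<in> car L n"
      using fg FC lo.mt_closed by auto
    have "hi.le (cyl L n (meet L n f g)) (cyl L n f)" "hi.le (cyl L n (meet L n f g)) (cyl L n g)"
      using cyl_mono C lo.mt_lower1 lo.mt_lower2 by auto
    then have "hi.le (meet L (Suc n) r (cyl L n (meet L n f g))) s"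
      "hi.le (meet L (Suc n) r (cyl L n (meet L n f g))) t"
      unfolding st using hi.mt_mono[OF r cyl_closed r cyl_closed hi.le_refl[OF r]] C by auto
    with fg F_mt show "\<exists>u\<in>B. hi.le u s \<and> hi.le u t" unfolding B_def by blast
  qed
  then show ?thesis unfolding cyl_filter_def B_def .
qed

lemma lattice_ideal_cyl_ideal:
  assumes F: "prime_filter L n F"
  shows "hi.lattice_ideal (cyl_ideal F)"
  unfolding cyl_ideal_def
proof (rule hi.lattice_ideal_down_closure)
  have "F \<subseteq> car L n" "F \<noteq> car L n" and F_prime: "\<And>u v. u \<in> car L n \<Longrightarrow> v \<in> car L n \<Longrightarrow>
      join L n u v \<in> F \<Longrightarrow> u \<in> F \<or> v \<in> F"
    using F unfolding prime_filter_def by auto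
  then show "cyl L n ` (car L n - F) \<subseteq> car L (Suc n)" "cyl L n ` (car L n - F) \<noteq> {}"
    using cyl_closed by blast+
  fix s t assume "s \<in> cyl L n ` (car L n - F)" "t \<in> cyl L n ` (car L n - F)"
  then obtain u v where uv: "u \<in> car L n - F" "v \<in> car L n - F" and st: "s = cyl L n u" "t = cyl L n v"
    by blast
  then have "join L n u v \<in> car L n - F" using F_prime lo.jn_closed by blast
  moreover have "hi.le s (cyl L n (join L n u v))" "hi.le t (cyl L n (join L n u v))"
    unfolding st using uv cyl_mono lo.jn_closed lo.jn_upper1 lo.jn_upper2 by auto
  ultimately show "\<exists>w\<in>cyl L n ` (car L n - F). hi.le s w \<and> hi.le t w" by blast
qed

lemma r_mem_cyl_filter:
  assumes "lo.lattice_filter F" and r: "r \<in> car L (Suc n)"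
  shows "r \<in> cyl_filter r F"
proof -
  have "top L n \<in> F" using assms(1) lo.lattice_filter_tp by blast
  moreover have "hi.le (meet L (Suc n) r (cyl L n (top L n))) r"
    using hi.mt_lower1[OF r cyl_closed[OF lo.tp_closed]] .
  ultimately show ?thesis
    unfolding cyl_filter_def hi.up_closure_def using r by blast
qed

lemma cyl_mem_cyl_filter: "r \<in> car L (Suc n) \<Longrightarrow> u \<in> F \<Longrightarrow> u \<in> car L n \<Longrightarrow> cyl L n u \<in> cyl_filter r F"
  unfolding cyl_filter_def hi.up_closure_def using cyl_closed hi.mt_lower2 by blast

lemma cyl_mem_cyl_ideal: "u \<in> car L n \<Longrightarrow> u \<notin> F \<Longrightarrow> cyl L n u \<in> cyl_ideal F"
  unfolding cyl_ideal_def hi.down_closure_def using cyl_closed hi.le_refl by blast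

lemma cyl_filter_disjoint_cyl_ideal:
  assumes F: "lo.lattice_filter F" and r: "r \<in> car L (Suc n)" and "ex L n r \<in> F"
  shows "cyl_filter r F \<inter> cyl_ideal F = {}"
proof (rule ccontr)
  have FC: "F \<subseteq> car L n"
    and F_up: "\<And>x y. x \<in> F \<Longrightarrow> y \<in> car L n \<Longrightarrow> lo.le x y \<Longrightarrow> y \<in> F"
    and F_mt: "\<And>x y. x \<in> F \<Longrightarrow> y \<in> F \<Longrightarrow> meet L n x y \<in> F"
    using F unfolding lo.lattice_filter_def by auto
  assume "cyl_filter r F \<inter> cyl_ideal F \<noteq> {}"
  then obtain z f u where z: "z \<in> car L (Suc n)" and "f \<in> F" "u \<in> car L n" "u \<notin> F"
    and "hi.le (meet L (Suc n) r (cyl L n f)) z" "hi.le z (cyl L n u)"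
    unfolding cyl_filter_def cyl_ideal_def hi.up_closure_def hi.down_closure_def by blast
  moreover have "f \<in> car L n" using \<open>f \<in> F\<close> FC by blast
  ultimately have "hi.le (meet L (Suc n) r (cyl L n f)) (cyl L n u)"
    using hi.le_trans r cyl_closed hi.mt_closed by blast
  then have "lo.le (meet L n (ex L n r) f) u"
    using ex_le_of_le_cyl[OF hi.mt_closed[OF r cyl_closed]] \<open>f \<in> car L n\<close> \<open>u \<in> car L n\<close> r
    by (simp add: ex_meet_cyl)
  with F_up F_mt \<open>ex L n r \<in> F\<close> \<open>f \<in> F\<close> \<open>u \<in> car L n\<close> have "u \<in> F" by blast
  with \<open>u \<notin> F\<close> show False ..
qed

end

theorem lemma4p11:
  fixes L :: "'a pe_alg" and n :: nat and F :: "'a set" and r :: 'a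
  assumes "pe_algebra L"
    and "prime_filter L n F"
    and "r \<in> car L (Suc n)"
    and "ex L n r \<in> F"
  shows "\<exists>G. prime_filter L (Suc n) G \<and> r \<in> G \<and>
             (\<forall>u\<in>car L n. cyl L n u \<in> G \<longleftrightarrow> u \<in> F)"
proof -
  interpret adjacent_sorts L n by (rule adjacent_sorts.intro) fact
  have bdl: "bdl_sort L k" for k using assms(1) by (simp add: pe_algebra_def)
  have F: "lo.lattice_filter F"
    using assms(2) prime_filter_iff_lattice_filter[OF bdl] by blast
  obtain G where G: "hi.lattice_filter G" "cyl_filter r F \<subseteq> G" "G \<inter> cyl_ideal F = {}"
    and G_prime: "\<forall>x\<in>car L (Suc n). \<forall>y\<in>car L (Suc n). join L (Suc n) x y \<in> G \<longrightarrow> x \<in> G \<or> y \<in> G"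
    using hi.prime_filter_separation[OF lattice_filter_cyl_filter[OF F assms(3)]
        lattice_ideal_cyl_ideal[OF assms(2)] cyl_filter_disjoint_cyl_ideal[OF F assms(3,4)]]
    by blast
  have "G \<noteq> car L (Suc n)"
    using lattice_ideal_cyl_ideal[OF assms(2)] G(3) unfolding hi.lattice_ideal_def by blast
  with G(1) G_prime have "prime_filter L (Suc n) G"
    by (simp add: prime_filter_iff_lattice_filter[OF bdl])
  moreover have "r \<in> G"
    using G(2) r_mem_cyl_filter[OF F assms(3)] by blast
  moreover have "cyl L n u \<in> G \<longleftrightarrow> u \<in> F" if "u \<in> car L n" for u
    using G(2,3) cyl_mem_cyl_filter[OF assms(3) _ that] cyl_mem_cyl_ideal[OF that] by blast
  ultimately show ?thesis by blast
qed

end
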